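(* Let $\Gamma\in\mathbb{R}^{p\times p}$ be a connected continuous-time interconnection, $r\in\mathbb{R}^p$ with $r^T\Gamma=0$, $r^T\mathbf 1=1$, and $\Omega$ symmetric positive definite with $(\Gamma-\mathbf 1r^T)^T\Omega+\Omega(\Gamma-\mathbf 1r^T)=-I_p$. Define $V(\mathbf x):=\mathbf x^T(\Omega\otimes I_n)\mathbf x$ on $\mathbb{R}^{np}$. Then for every Riemann-integrable $Q:\mathbb{R}_{\ge0}\to\mathcal Q_n$ and all $t\ge0$, the solution of $\dot{\mathbf x}=(\Gamma\otimes Q_t)\mathbf x$ satisfies $$\frac{d}{dt}V(\mathbf x(t)-\bar{\mathbf x})=-(\mathbf x(t)-\bar{\mathbf x})^T(I_p\otimes Q_t)(\mathbf x(t)-\bar{\mathbf x}),$$ where $\bar{\mathbf x}:=(\mathbf 1r^T\otimes I_n)\mathbf x(0)$.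
   Context: $\mathbf 1$ all-ones vector; $\otimes$ Kronecker product; $\mathcal Q_n$ symmetric positive semidefinite $n\times n$ matrices. Continuous-time interconnection: $\gamma_{ij}\ge0$ ($i\ne j$), $\gamma_{ii}=-\sum_{j\ne i}\gamma_{ij}$; graph edge $(n_i,n_j)$ iff $\gamma_{ij}>0$; connected if some node is reachable by a directed path from every other node. *)

theory Defs
  imports "HOL-Analysis.Analysis"
begin

text \<open>Kronecker product of square matrices; the stacked space R^{np} is indexed by
  pairs (i,k) with i the block (agent) index and k the index within a block.\<close>
definition kron :: "real^'p^'p \<Rightarrow> real^'n^'n \<Rightarrow> real^('p \<times> 'n)^('p \<times> 'n)" where
  "kron A B = (\<chi> ik. \<chi> jl. A$(fst ik)$(fst jl) * B$(snd ik)$(snd jl))"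

definition ones_outer :: "real^'p \<Rightarrow> real^'p^'p" where
  "ones_outer r = (\<chi> i j. r$j)"

definition ones :: "real^'p" where
  "ones = (\<chi> i. 1)"

definition ct_interconnection :: "real^'p^'p \<Rightarrow> bool" where
  "ct_interconnection G \<longleftrightarrow>
     (\<forall>i j. i \<noteq> j \<longrightarrow> G$i$j \<ge> 0) \<and>
     (\<forall>i. G$i$i = - (\<Sum>j\<in>UNIV - {i}. G$i$j))"

definition graph_edges :: "real^'p^'p \<Rightarrow> ('p \<times> 'p) set" where
  "graph_edges G = {(i,j). G$i$j > 0}"

definition connected_interconnection :: "real^'p^'p \<Rightarrow> bool" where
  "connected_interconnection G \<longleftrightarrow> ct_interconnection G \<and>
     (\<exists>k. \<forall>i. (i,k) \<in> (graph_edges G)\<^sup>*)"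

definition sym_psd :: "real^'n^'n \<Rightarrow> bool" where
  "sym_psd A \<longleftrightarrow> transpose A = A \<and> (\<forall>v. 0 \<le> v \<bullet> (A *v v))"

definition sym_pd :: "real^'n^'n \<Rightarrow> bool" where
  "sym_pd A \<longleftrightarrow> transpose A = A \<and> (\<forall>v. v \<noteq> 0 \<longrightarrow> 0 < v \<bullet> (A *v v))"

text \<open>Riemann integrability on [a,b] (constant-gauge Riemann sums over tagged divisions).\<close>
definition riemann_integrable_on :: "(real \<Rightarrow> 'a::real_normed_vector) \<Rightarrow> real \<Rightarrow> real \<Rightarrow> bool" where
  "riemann_integrable_on f a b \<longleftrightarrow>
     (\<exists>I. \<forall>e>0. \<exists>d>0. \<forall>D. D tagged_division_of {a..b} \<and> (\<lambda>x. ball x d) fine D \<longrightarrow>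
        norm ((\<Sum>(x,K)\<in>D. Henstock_Kurzweil_Integration.content K *\<^sub>R f x) - I) < e)"

definition locally_riemann_integrable :: "(real \<Rightarrow> 'a::real_normed_vector) \<Rightarrow> bool" where
  "locally_riemann_integrable f \<longleftrightarrow> (\<forall>T\<ge>0. riemann_integrable_on f 0 T)"

end

theory Submission
  imports Defs
begin

text \<open>The projection \<open>P = 1 r\<^sup>T \<otimes> I\<close> annihilates \<open>\<Gamma> \<otimes> Q\<^sub>t\<close> from the left (as \<open>r\<^sup>T \<Gamma> = 0\<close>),
  so \<open>P x(t)\<close> is conserved and equals \<open>xbar\<close>; from the right (as \<open>\<Gamma> 1 = 0\<close>), so \<open>xbar\<close> is an
  equilibrium and the deviation \<open>z = x - xbar\<close> obeys the same equation. Since \<open>P z = 0\<close>, on \<open>z\<close>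
  the matrix \<open>\<Gamma> \<otimes> Q\<^sub>t\<close> acts as \<open>(\<Gamma> - 1 r\<^sup>T) \<otimes> Q\<^sub>t\<close>, and the Lyapunov equation for
  \<open>\<Gamma> - 1 r\<^sup>T\<close>, tensored with the symmetric \<open>Q\<^sub>t\<close>, turns the derivative of \<open>z\<^sup>T (\<Omega> \<otimes> I) z\<close>
  into \<open>-z\<^sup>T (I \<otimes> Q\<^sub>t) z\<close>.\<close>

lemma kron_mult: "kron A B ** kron C D = kron (A ** C) (B ** D)"
  unfolding kron_def matrix_matrix_mult_def
  by (simp add: vec_eq_iff UNIV_Times_UNIV[symmetric] sum.cartesian_product
      sum_product split_def mult_ac del: UNIV_Times_UNIV)

lemma kron_transpose: "transpose (kron A B) = kron (transpose A) (transpose B)"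
  unfolding kron_def transpose_def by (simp add: vec_eq_iff)

lemma kron_add_left: "kron (A + C) B = kron A B + kron C B"
  unfolding kron_def by (simp add: vec_eq_iff algebra_simps)

lemma kron_uminus_left: "kron (- A) B = - kron A B"
  unfolding kron_def by (simp add: vec_eq_iff)

lemma kron_zero_left: "kron 0 B = 0"
  unfolding kron_def by (simp add: vec_eq_iff)

lemma ct_interconnection_mult_ones:
  assumes "ct_interconnection G"
  shows "G *v ones = 0"
proof -
  have "(\<Sum>j\<in>UNIV. G$i$j) = G$i$i + (\<Sum>j\<in>UNIV - {i}. G$i$j)" for i
    by (simp add: sum.remove)
  then show ?thesis
    using assms by (simp add: ct_interconnection_def vec_eq_iff matrix_vector_mult_def ones_def)
qed

lemma matrix_ones_outer_eq_zero:
  assumes "G *v ones = 0"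
  shows "G ** ones_outer r = 0"
proof -
  have "(\<Sum>k\<in>UNIV. G$i$k) = 0" for i
    using assms by (simp add: vec_eq_iff matrix_vector_mult_def ones_def)
  then show ?thesis
    by (simp add: vec_eq_iff matrix_matrix_mult_def ones_outer_def sum_distrib_right[symmetric])
qed

lemma ones_outer_matrix_eq_zero:
  assumes "r v* G = 0"
  shows "ones_outer r ** G = 0"
proof -
  have "(\<Sum>k\<in>UNIV. r$k * G$k$j) = 0" for j
    using assms by (simp add: vec_eq_iff vector_matrix_mult_def)
  then show ?thesis
    by (simp add: vec_eq_iff matrix_matrix_mult_def ones_outer_def)
qed

lemma ones_outer_idem:
  assumes "r \<bullet> ones = 1"
  shows "ones_outer r ** ones_outer r = ones_outer r"
proof -
  have "(\<Sum>k\<in>UNIV. r$k) = 1"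
    using assms by (simp add: inner_vec_def ones_def)
  then show ?thesis
    by (simp add: vec_eq_iff matrix_matrix_mult_def ones_outer_def sum_distrib_right[symmetric])
qed

lemma matrix_image_constant_if_derivative_annihilated:
  fixes x :: "real \<Rightarrow> real^'n"
  assumes "\<And>s. s \<ge> 0 \<Longrightarrow> (x has_vector_derivative f s) (at s within {0..})"
    and "\<And>s. s \<ge> 0 \<Longrightarrow> P *v f s = 0"
    and "t \<ge> 0"
  shows "P *v x t = P *v x 0"
proof -
  have "((\<lambda>s. P *v x s) has_vector_derivative 0) (at s within {0..})" if "s \<in> {0..}" for s
    using bounded_linear.has_vector_derivative[OF matrix_vector_mul_bounded_linear assms(1), of s P]
      assms(2)[of s] that by simp
  then obtain c where "\<And>s. s \<in> {0..} \<Longrightarrow> P *v x s = c"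
    using has_vector_derivative_zero_constant[of "{0..}" "\<lambda>s. P *v x s"] by auto
  then show ?thesis
    using \<open>t \<ge> 0\<close> by simp
qed

lemma quadratic_form_has_real_derivative:
  fixes z :: "real \<Rightarrow> real^'n"
  assumes "(z has_vector_derivative M *v z t) (at t within S)"
  shows "((\<lambda>s. z s \<bullet> (K *v z s)) has_real_derivative
           z t \<bullet> ((K ** M + transpose M ** K) *v z t)) (at t within S)"
proof -
  have "((\<lambda>s. z s \<bullet> (K *v z s)) has_vector_derivative
      z t \<bullet> (K *v (M *v z t)) + (M *v z t) \<bullet> (K *v z t)) (at t within S)"
    using bounded_bilinear.has_vector_derivative[OF bounded_bilinear_inner assms
        bounded_linear.has_vector_derivative[OF matrix_vector_mul_bounded_linear assms]]
    by simp
  moreover have "(M *v z t) \<bullet> (K *v z t) = z t \<bullet> ((transpose M ** K) *v z t)"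
    by (metis dot_lmul_matrix matrix_vector_mul_assoc vector_transpose_matrix)
  ultimately show ?thesis
    by (simp add: has_real_derivative_iff_has_vector_derivative matrix_vector_mul_assoc
        matrix_vector_mult_add_rdistrib inner_add_right)
qed

lemma kron_lyapunov:
  assumes "transpose Q = Q"
  shows "kron \<Omega> (mat 1) ** kron A Q + transpose (kron A Q) ** kron \<Omega> (mat 1)
           = kron (transpose A ** \<Omega> + \<Omega> ** A) Q"
  using assms by (simp add: kron_mult kron_transpose kron_add_left add.commute)

lemma deviation_has_vector_derivative:
  fixes x :: "real \<Rightarrow> real^('p::finite \<times> 'n::finite)"
  assumes G_ones: "G *v ones = 0" and r_left: "r v* G = 0" and r_norm: "r \<bullet> ones = 1"
    and sol: "\<And>s. s \<ge> 0 \<Longrightarrow> (x has_vector_derivative kron G (Q s) *v x s) (at s within {0..})"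
    and "t \<ge> 0"
  defines "xbar \<equiv> kron (ones_outer r) (mat 1) *v x 0"
  shows "((\<lambda>s. x s - xbar) has_vector_derivative kron (G - ones_outer r) (Q t) *v (x t - xbar))
           (at t within {0..})"
proof -
  define P :: "real^('p \<times> 'n)^('p \<times> 'n)" where "P = kron (ones_outer r) (mat 1)"
  have "P *v x t = P *v x 0"
    using matrix_image_constant_if_derivative_annihilated[of x "\<lambda>s. kron G (Q s) *v x s" P,
        OF sol _ \<open>t \<ge> 0\<close>]
    by (simp add: P_def matrix_vector_mul_assoc kron_mult
        ones_outer_matrix_eq_zero[OF r_left] kron_zero_left)
  then have "P *v (x t - xbar) = 0"
    by (simp add: xbar_def matrix_vector_mult_diff_distrib matrix_vector_mul_assoc
        P_def kron_mult ones_outer_idem[OF r_norm])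
  then have "kron (ones_outer r) (Q t) *v (x t - xbar) = 0"
    using kron_mult[of "mat 1" "Q t" "ones_outer r" "mat 1"]
    by (metis P_def matrix_mul_lid matrix_mul_rid matrix_vector_mul_assoc matrix_vector_mult_0_right)
  moreover have "kron G (Q t) = kron (G - ones_outer r) (Q t) + kron (ones_outer r) (Q t)"
    by (simp add: kron_add_left[symmetric])
  ultimately have "kron (G - ones_outer r) (Q t) *v (x t - xbar) = kron G (Q t) *v (x t - xbar)"
    by (simp add: matrix_vector_mult_add_rdistrib)
  also have "\<dots> = kron G (Q t) *v x t - 0"
    by (simp add: xbar_def matrix_vector_mult_diff_distrib matrix_vector_mul_assoc kron_mult
        matrix_ones_outer_eq_zero[OF G_ones] kron_zero_left)
  finally show ?thesis
    using has_vector_derivative_diff[OF sol[OF \<open>t \<ge> 0\<close>] has_vector_derivative_const]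
    by simp
qed

theorem lemma2:
  fixes G \<Omega> :: "real^'p^'p" and r :: "real^'p"
    and Q :: "real \<Rightarrow> real^'n^'n" and x :: "real \<Rightarrow> real^('p \<times> 'n)"
  assumes conn: "connected_interconnection G"
    and r_left: "r v* G = 0"
    and r_norm: "r \<bullet> ones = 1"
    and Omega_pd: "sym_pd \<Omega>"
    and lyap: "transpose (G - ones_outer r) ** \<Omega> + \<Omega> ** (G - ones_outer r) = - mat 1"
    and Q_int: "locally_riemann_integrable Q"
    and Q_psd: "\<forall>t\<ge>0. sym_psd (Q t)"
    and sol: "\<forall>t\<ge>0. (x has_vector_derivative (kron G (Q t) *v x t)) (at t within {0..})"
  shows "\<forall>t\<ge>0.
    let V = (\<lambda>y. y \<bullet> (kron \<Omega> (mat 1) *v y));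
        xbar = kron (ones_outer r) (mat 1) *v x 0
    in ((\<lambda>s. V (x s - xbar)) has_real_derivative
          (- ((x t - xbar) \<bullet> (kron (mat 1) (Q t) *v (x t - xbar))))) (at t within {0..})"
proof (intro allI impI)
  fix t :: real assume "t \<ge> 0"
  define A where "A = G - ones_outer r"
  define xbar where "xbar = kron (ones_outer r) (mat 1) *v x 0"
  define z where "z s = x s - xbar" for s
  have "G *v ones = 0"
    using conn by (simp add: connected_interconnection_def ct_interconnection_mult_ones)
  then have dz: "(z has_vector_derivative kron A (Q t) *v z t) (at t within {0..})"
    using deviation_has_vector_derivative[OF _ r_left r_norm _ \<open>t \<ge> 0\<close>] sol
    unfolding z_def[abs_def] xbar_def A_def by blast
  have "transpose (Q t) = Q t"
    using Q_psd \<open>t \<ge> 0\<close> by (simp add: sym_psd_def)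
  then have "kron \<Omega> (mat 1) ** kron A (Q t) + transpose (kron A (Q t)) ** kron \<Omega> (mat 1)
      = 0 - kron (mat 1) (Q t)"
    by (simp add: kron_lyapunov A_def lyap kron_uminus_left)
  then have "z t \<bullet> ((kron \<Omega> (mat 1) ** kron A (Q t)
        + transpose (kron A (Q t)) ** kron \<Omega> (mat 1)) *v z t)
      = - (z t \<bullet> (kron (mat 1) (Q t) *v z t))"
    by (simp only: matrix_vector_mult_diff_rdistrib) simp
  with quadratic_form_has_real_derivative[OF dz, of "kron \<Omega> (mat 1)"]
  show "let V = (\<lambda>y. y \<bullet> (kron \<Omega> (mat 1) *v y));
        xbar = kron (ones_outer r) (mat 1) *v x 0
    in ((\<lambda>s. V (x s - xbar)) has_real_derivative
          (- ((x t - xbar) \<bullet> (kron (mat 1) (Q t) *v (x t - xbar))))) (at t within {0..})"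
    by (simp add: Let_def z_def xbar_def)
qed

end
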